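(* Let $G=(V,E)$ be a connected graph with $n$ vertices, $\tau$ a set of types with $|\tau|>1$, $f:\tau\to\mathbb{Q}_{\ge1}$ a fitness function, and $D\in\mathcal D(G,\tau)$. Let $f^*=\max\{f(j): j\in\tau\setminus\tau^+(f)\}$. Then for every $\alpha\in\tau^+(f)$, $\mathbb{E}(A_\alpha(G,\tau,f,D))\le(|\tau^+(f)|-1)n^6+\frac{f(\alpha)}{f(\alpha)-f^*}(n+1)n^3$.
   Context: $\tau^+(f)=\{i\in\tau:f(i)=\max_{j\in\tau}f(j)\}$. For $G=(V,E)$, $N(v)$ is the neighbourhood of $v$. $\Omega$ is the set of states $V\to\tau$; for $S\in\Omega$, $S|_{v\to w}$ equals $S$ except $w$ gets type $S(v)$. The Moran process $M(G,\tau,f,D)$ is the Markov chain on $\Omega$ with $M_0$ drawn from $D$ and, given $M_t$, a vertex $v$ chosen with probability $f(M_t(v))/\sum_uf(M_t(u))$, then $w\in N(v)$ uniformly, and $M_{t+1}=M_t|_{v\to w}$. $V_j(t)=\{v:M_t(v)=j\}$, and $A_j(G,\tau,f,D)=\min\{t\in\mathbb{Z}_{\ge0}:V_j(t)=V\text{ or }V_j(t)=\emptyset\}$. With $k=|\tau|$, $V[k]$ is the set of $k$-tuples of distinct vertices, $\tau[k]$ the set of $k$-tuples of distinct types, $\Omega(\mathbf u,\boldsymbol\gamma)$ the set of states mapping the $i$-th entry of $\mathbf u$ to the $i$-th entry of $\boldsymbol\gamma$ for all $i$. $\mathcal D(G,\tau)$ is the set of distributions $D$ on $\Omega$ for which there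 are distributions $D_{\mathbf u,\boldsymbol\gamma}$ on $\Omega(\mathbf u,\boldsymbol\gamma)$ with $\Pr_D(S)=\frac{1}{|V[k]\times\tau[k]|}\sum_{(\mathbf u,\boldsymbol\gamma)\in V[k]\times\tau[k]}\Pr_{D_{\mathbf u,\boldsymbol\gamma}}(S)$ for all $S$. *)

theory Defs
  imports "HOL-Probability.Probability"
begin

definition simple_graph :: "'v set \<Rightarrow> ('v \<times> 'v) set \<Rightarrow> bool" where
  "simple_graph V E \<longleftrightarrow> finite V \<and> E \<subseteq> V \<times> V \<and> sym E \<and> irrefl E"

definition connected_graph :: "'v set \<Rightarrow> ('v \<times> 'v) set \<Rightarrow> bool" where
  "connected_graph V E \<longleftrightarrow> simple_graph V E \<and> V \<noteq> {} \<and> (\<forall>u\<in>V. \<forall>v\<in>V. (u, v) \<in> E\<^sup>*)"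

definition nbhd :: "('v \<times> 'v) set \<Rightarrow> 'v \<Rightarrow> 'v set" where
  "nbhd E v = {w. (v, w) \<in> E}"

definition max_types :: "'a set \<Rightarrow> ('a \<Rightarrow> rat) \<Rightarrow> 'a set" where
  "max_types tau f = {i \<in> tau. f i = Max (f ` tau)}"

definition states :: "'v set \<Rightarrow> 'a set \<Rightarrow> ('v \<Rightarrow> 'a) set" where
  "states V tau = (V \<rightarrow>\<^sub>E tau)"

definition reproduce :: "('v \<Rightarrow> 'a) \<Rightarrow> 'v \<Rightarrow> 'v \<Rightarrow> ('v \<Rightarrow> 'a)" where
  "reproduce S v w = S(w := S v)"

definition moran_step :: "'v set \<Rightarrow> ('v \<times> 'v) set \<Rightarrow> ('a \<Rightarrow> rat) \<Rightarrow> ('v \<Rightarrow> 'a) \<Rightarrow> ('v \<Rightarrow> 'a) pmf" where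
  "moran_step V E f S =
     bind_pmf (embed_pmf (\<lambda>v. if v \<in> V then real_of_rat (f (S v)) / (\<Sum>u\<in>V. real_of_rat (f (S u))) else 0))
       (\<lambda>v. map_pmf (\<lambda>w. reproduce S v w) (pmf_of_set (nbhd E v)))"

primrec moran_paths :: "'v set \<Rightarrow> ('v \<times> 'v) set \<Rightarrow> ('a \<Rightarrow> rat) \<Rightarrow> ('v \<Rightarrow> 'a) pmf \<Rightarrow> nat \<Rightarrow> ('v \<Rightarrow> 'a) list pmf" where
  "moran_paths V E f D 0 = map_pmf (\<lambda>S. [S]) D"
| "moran_paths V E f D (Suc t) =
     bind_pmf (moran_paths V E f D t) (\<lambda>xs. map_pmf (\<lambda>S'. xs @ [S']) (moran_step V E f (last xs)))"

definition absorbed :: "'v set \<Rightarrow> 'a \<Rightarrow> ('v \<Rightarrow> 'a) \<Rightarrow> bool" where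
  "absorbed V j S \<longleftrightarrow> {v \<in> V. S v = j} = V \<or> {v \<in> V. S v = j} = {}"

text \<open>E(A_j(G,tau,f,D)) = sum_{t>=0} Pr(A_j > t), where A_j > t iff none of M_0..M_t is absorbed.\<close>
definition expected_absorption_time ::
  "'v set \<Rightarrow> ('v \<times> 'v) set \<Rightarrow> ('a \<Rightarrow> rat) \<Rightarrow> ('v \<Rightarrow> 'a) pmf \<Rightarrow> 'a \<Rightarrow> ennreal" where
  "expected_absorption_time V E f D j =
     (\<Sum>t. ennreal (measure_pmf.prob (moran_paths V E f D t) {xs. \<forall>S\<in>set xs. \<not> absorbed V j S}))"

definition distinct_tuples :: "'b set \<Rightarrow> nat \<Rightarrow> 'b list set" where
  "distinct_tuples A k = {xs. length xs = k \<and> distinct xs \<and> set xs \<subseteq> A}"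

definition states_fixing :: "'v set \<Rightarrow> 'a set \<Rightarrow> 'v list \<Rightarrow> 'a list \<Rightarrow> ('v \<Rightarrow> 'a) set" where
  "states_fixing V tau us gs = {S \<in> states V tau. \<forall>i < length us. S (us ! i) = gs ! i}"

definition init_dists :: "'v set \<Rightarrow> 'a set \<Rightarrow> ('v \<Rightarrow> 'a) pmf set" where
  "init_dists V tau = {D. set_pmf D \<subseteq> states V tau \<and>
     (\<exists>Du :: 'v list \<Rightarrow> 'a list \<Rightarrow> ('v \<Rightarrow> 'a) pmf.
        (\<forall>us \<in> distinct_tuples V (card tau). \<forall>gs \<in> distinct_tuples tau (card tau).
            set_pmf (Du us gs) \<subseteq> states_fixing V tau us gs) \<and>
        (\<forall>S. pmf D S = (\<Sum>(us, gs) \<in> distinct_tuples V (card tau) \<times> distinct_tuples tau (card tau).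
                             pmf (Du us gs) S)
                         / real (card (distinct_tuples V (card tau) \<times> distinct_tuples tau (card tau)))))}"

end

theory Submission
  imports Defs
begin

(* Let phi(S) be the sum of 1/deg v over the vertices v of type alpha; it lies between 0 and
   phi_max = sum of all 1/deg v <= n.  Since alpha has maximal fitness, phi is a submartingale:
   pairing every edge with its reverse writes the expected increment as a sum of nonnegative
   terms (sel v - sel w) (ind v - ind w) / (deg v deg w).  A state that is not absorbed has an
   edge from an alpha-vertex to another type.  That edge alone makes the expected squared
   increment at least n^-4, and, if alpha is the unique fittest type, the expected increment at
   least min_drift = (f alpha - f star) / (f alpha n^3).  The additive drift theorem, applied
   to n^4 (phi_max^2 - phi^2) and to (phi_max - phi) / min_drift, bounds the expected
   absorption time by n^6 and by f alpha / (f alpha - f star) n^4 respectively. *)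

lemma suminf_le_telescoping_ennreal:
  fixes a c :: "nat \<Rightarrow> ennreal"
  assumes step: "\<And>t. c (Suc t) + a t \<le> c t"
  shows "(\<Sum>t. a t) \<le> c 0"
proof (rule suminf_le_const)
  have partial: "(\<Sum>s<t. a s) + c t \<le> c 0" for t
  proof (induction t)
    case (Suc t)
    have "(\<Sum>s<Suc t. a s) + c (Suc t) = (\<Sum>s<t. a s) + (c (Suc t) + a t)"
      by (simp add: algebra_simps)
    also have "\<dots> \<le> (\<Sum>s<t. a s) + c t"
      using step by (rule add_left_mono)
    finally show ?case using Suc.IH by (rule order.trans)
  qed simp
  show "(\<Sum>s<t. a s) \<le> c 0" for t
    using add_increasing2[OF zero_le order.refl] partial by (rule order.trans)
qed simp

lemma moran_paths_last_in_invariant: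
  assumes "set_pmf D \<subseteq> I"
    and "\<And>S. S \<in> I \<Longrightarrow> set_pmf (moran_step V E f S) \<subseteq> I"
    and "xs \<in> set_pmf (moran_paths V E f D t)"
  shows "xs \<noteq> [] \<and> last xs \<in> I"
  using assms(3)
proof (induction t arbitrary: xs)
  case 0
  then show ?case using assms(1) by auto
next
  case (Suc t)
  then show ?case using assms(2) by fastforce
qed

theorem expected_absorption_time_le_additive_drift:
  fixes h :: "('v \<Rightarrow> 'a) \<Rightarrow> real"
  assumes h_le: "\<And>S. S \<in> I \<Longrightarrow> h S \<le> B"
    and D: "set_pmf D \<subseteq> I"
    and invariant: "\<And>S. S \<in> I \<Longrightarrow> set_pmf (moran_step V E f S) \<subseteq> I"
    and drift: "\<And>S. S \<in> I \<Longrightarrow> \<not> absorbed V j S \<Longrightarrow>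
      (\<integral>\<^sup>+S'. ennreal (h S') \<partial>moran_step V E f S) + 1 \<le> ennreal (h S)"
  shows "expected_absorption_time V E f D j \<le> ennreal B"
proof -
  let ?P = "moran_paths V E f D"
  define alive where "alive xs \<longleftrightarrow> (\<forall>S\<in>set xs. \<not> absorbed V j S)" for xs
  \<comment> \<open>From time t to t+1, c drops by at least the probability of surviving up to time t.\<close>
  define c where "c t = (\<integral>\<^sup>+xs. (if alive xs then ennreal (h (last xs)) else 0) \<partial>?P t)" for t
  have pointwise: "(\<integral>\<^sup>+S'. (if alive (xs @ [S']) then ennreal (h S') else 0) \<partial>moran_step V E f (last xs))
      + indicator {xs. alive xs} xs \<le> (if alive xs then ennreal (h (last xs)) else 0)"
    if "xs \<in> set_pmf (?P t)" for xs t
  proof (cases "alive xs")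
    case True
    have last: "last xs \<in> I" "\<not> absorbed V j (last xs)"
      using moran_paths_last_in_invariant[OF D invariant that] True by (auto simp: alive_def)
    have "(\<integral>\<^sup>+S'. (if alive (xs @ [S']) then ennreal (h S') else 0) \<partial>moran_step V E f (last xs))
        \<le> (\<integral>\<^sup>+S'. ennreal (h S') \<partial>moran_step V E f (last xs))"
      by (intro nn_integral_mono) auto
    then show ?thesis
      using True drift[OF last] by (auto intro: order.trans add_right_mono)
  next
    case False
    then have "\<not> alive (xs @ [S'])" for S' by (simp add: alive_def)
    with False show ?thesis by simp
  qed
  have "c (Suc t) + emeasure (?P t) {xs. alive xs} \<le> c t" for t
  proof -
    have "c (Suc t) = (\<integral>\<^sup>+xs. \<integral>\<^sup>+S'. (if alive (xs @ [S']) then ennreal (h S') else 0)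
        \<partial>moran_step V E f (last xs) \<partial>?P t)"
      unfolding c_def by (simp, intro nn_integral_cong, simp)
    then have "c (Suc t) + emeasure (?P t) {xs. alive xs} =
      (\<integral>\<^sup>+xs. (\<integral>\<^sup>+S'. (if alive (xs @ [S']) then ennreal (h S') else 0) \<partial>moran_step V E f (last xs))
        + indicator {xs. alive xs} xs \<partial>?P t)"
      by (simp add: nn_integral_add)
    also have "\<dots> \<le> c t"
      unfolding c_def using pointwise by (intro nn_integral_mono_AE AE_pmfI)
    finally show ?thesis .
  qed
  then have "(\<Sum>t. emeasure (?P t) {xs. alive xs}) \<le> c 0"
    by (rule suminf_le_telescoping_ennreal)
  moreover have "expected_absorption_time V E f D j = (\<Sum>t. emeasure (?P t) {xs. alive xs})"
    unfolding expected_absorption_time_def alive_def by (simp add: measure_pmf.emeasure_eq_measure)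
  moreover have "c 0 = (\<integral>\<^sup>+S. (if alive [S] then ennreal (h S) else 0) \<partial>D)"
    unfolding c_def by (simp, intro nn_integral_cong, simp)
  moreover have "\<dots> \<le> (\<integral>\<^sup>+S. ennreal B \<partial>D)"
    using D h_le by (intro nn_integral_mono_AE AE_pmfI) (auto intro: ennreal_leI)
  ultimately show ?thesis by simp
qed

locale moran_graph =
  fixes V :: "'v set" and E :: "('v \<times> 'v) set" and tau :: "'a set" and f :: "'a \<Rightarrow> rat"
  assumes connected: "connected_graph V E"
    and fitness_ge_1: "\<forall>i\<in>tau. f i \<ge> 1"
begin

definition deg :: "'v \<Rightarrow> real" where "deg v = real (card (nbhd E v))"
definition n :: real where "n = real (card V)"
definition typed :: "('v \<Rightarrow> 'a) \<Rightarrow> bool" where "typed S \<longleftrightarrow> S ` V \<subseteq> tau"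
definition fit :: "('v \<Rightarrow> 'a) \<Rightarrow> 'v \<Rightarrow> real" where "fit S v = real_of_rat (f (S v))"
definition total_fit :: "('v \<Rightarrow> 'a) \<Rightarrow> real" where "total_fit S = (\<Sum>u\<in>V. fit S u)"
definition sel :: "('v \<Rightarrow> 'a) \<Rightarrow> 'v \<Rightarrow> real" where
  "sel S v = (if v \<in> V then fit S v / total_fit S else 0)"

lemma finite_V: "finite V" and edges_subset: "E \<subseteq> V \<times> V" and sym_E: "sym E"
  and V_nonempty: "V \<noteq> {}"
  using connected by (auto simp: connected_graph_def simple_graph_def)

lemma edge_endpoints: "(v, w) \<in> E \<Longrightarrow> v \<in> V \<and> w \<in> V"
  using edges_subset by auto

lemma finite_E: "finite E"
  using finite_V edges_subset by (meson finite_SigmaI finite_subset)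

lemma nbhd_subset: "nbhd E v \<subseteq> V"
  using edges_subset by (auto simp: nbhd_def)

lemma finite_nbhd: "finite (nbhd E v)"
  using nbhd_subset finite_V finite_subset by blast

lemma deg_nonneg: "0 \<le> deg v"
  by (simp add: deg_def)

lemma deg_le_n: "deg v \<le> n"
  unfolding deg_def n_def using card_mono[OF finite_V nbhd_subset] by simp

lemma n_ge_1: "1 \<le> n"
  unfolding n_def using finite_V V_nonempty by (simp add: Suc_leI card_gt_0_iff)

lemma fit_ge_1: "typed S \<Longrightarrow> v \<in> V \<Longrightarrow> 1 \<le> fit S v"
  using fitness_ge_1 unfolding typed_def fit_def by (metis image_subset_iff of_rat_1 of_rat_less_eq)

lemma total_fit_pos: "typed S \<Longrightarrow> 0 < total_fit S"
proof -
  assume "typed S"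
  then have "(\<Sum>u\<in>V. 1) \<le> total_fit S" unfolding total_fit_def by (intro sum_mono fit_ge_1)
  then show ?thesis using n_ge_1 by (simp add: n_def)
qed

lemma sel_nonneg: "typed S \<Longrightarrow> 0 \<le> sel S v"
  unfolding sel_def using total_fit_pos[of S] fit_ge_1[of S v] by (auto intro!: divide_nonneg_pos)

lemma sum_sel: "typed S \<Longrightarrow> (\<Sum>v\<in>V. sel S v) = 1"
  using total_fit_pos[of S] by (simp add: sel_def sum_divide_distrib[symmetric] total_fit_def)

lemma sum_edges: "(\<Sum>v\<in>V. \<Sum>w\<in>nbhd E v. F v w) = (\<Sum>(v, w)\<in>E. F v w)"
proof -
  have "E = Sigma V (nbhd E)" using edges_subset by (auto simp: nbhd_def)
  then show ?thesis using finite_V finite_nbhd by (simp add: sum.Sigma)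
qed

lemma sum_edges_swap: "(\<Sum>(v, w)\<in>E. F v w) = (\<Sum>(v, w)\<in>E. F w v)"
  using sym_E by (intro sum.reindex_bij_witness[where i=prod.swap and j=prod.swap]) (auto dest: symD)

lemma moran_step_eq_sel:
  "moran_step V E f S =
     bind_pmf (embed_pmf (sel S)) (\<lambda>v. map_pmf (reproduce S v) (pmf_of_set (nbhd E v)))"
  unfolding moran_step_def sel_def fit_def total_fit_def by simp

lemma
  assumes "typed S"
  shows pmf_embed_sel: "pmf (embed_pmf (sel S)) v = sel S v"
    and set_pmf_embed_sel: "set_pmf (embed_pmf (sel S)) \<subseteq> V"
proof -
  have "(\<integral>\<^sup>+v. ennreal (sel S v) \<partial>count_space UNIV)
      = (\<integral>\<^sup>+v. ennreal (sel S v) * indicator V v \<partial>count_space UNIV)"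
    by (intro nn_integral_cong) (simp add: sel_def split: split_indicator)
  also have "\<dots> = (\<Sum>v\<in>V. ennreal (sel S v))"
    using finite_V by (simp add: nn_integral_count_space_indicator[symmetric] nn_integral_count_space_finite)
  also have "\<dots> = 1"
    using sel_nonneg[OF assms] sum_sel[OF assms] by simp
  finally have total: "(\<integral>\<^sup>+v. ennreal (sel S v) \<partial>count_space UNIV) = 1" .
  show "pmf (embed_pmf (sel S)) v = sel S v"
    using pmf_embed_pmf[OF sel_nonneg[OF assms] total] .
  show "set_pmf (embed_pmf (sel S)) \<subseteq> V"
  proof
    fix v assume "v \<in> set_pmf (embed_pmf (sel S))"
    then have "sel S v \<noteq> 0" using set_embed_pmf[OF sel_nonneg[OF assms] total] by blast
    then show "v \<in> V" by (simp add: sel_def split: if_splits)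
  qed
qed

lemma moran_step_typed:
  assumes "typed S" "S' \<in> set_pmf (moran_step V E f S)"
  shows "typed S'"
proof -
  from assms(2) obtain v w where "v \<in> V" "S' = S(w := S v)"
    using set_pmf_embed_sel[OF assms(1)] unfolding moran_step_eq_sel by (auto simp: reproduce_def)
  then show ?thesis using assms(1) by (auto simp: typed_def)
qed

lemma nn_integral_moran_step:
  assumes S: "typed S" and no_isolated: "\<forall>v\<in>V. nbhd E v \<noteq> {}" and g_nonneg: "\<And>S. 0 \<le> g S"
  shows "(\<integral>\<^sup>+S'. ennreal (g S') \<partial>moran_step V E f S)
     = ennreal (\<Sum>(v, w)\<in>E. sel S v / deg v * g (S(w := S v)))"
proof -
  have uniform_nbhd: "(\<integral>\<^sup>+w. ennreal (g (reproduce S v w)) \<partial>pmf_of_set (nbhd E v))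
      = ennreal (\<Sum>w\<in>nbhd E v. g (S(w := S v)) / deg v)" if "v \<in> V" for v
  proof -
    have ne: "nbhd E v \<noteq> {}" using no_isolated that by auto
    have "(\<integral>\<^sup>+w. ennreal (g (reproduce S v w)) \<partial>pmf_of_set (nbhd E v))
        = ennreal (\<Sum>w\<in>nbhd E v. g (S(w := S v))) / ennreal (deg v)"
      using ne finite_nbhd g_nonneg
      by (simp add: nn_integral_pmf_of_set reproduce_def deg_def ennreal_of_nat_eq_real_of_nat sum_nonneg)
    also have "\<dots> = ennreal ((\<Sum>w\<in>nbhd E v. g (S(w := S v))) / deg v)"
      using ne finite_nbhd g_nonneg by (intro divide_ennreal) (auto simp: deg_def card_gt_0_iff sum_nonneg)
    finally show ?thesis by (simp add: sum_divide_distrib)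
  qed
  have "(\<integral>\<^sup>+S'. ennreal (g S') \<partial>moran_step V E f S)
      = (\<Sum>v\<in>V. (\<integral>\<^sup>+w. ennreal (g (reproduce S v w)) \<partial>pmf_of_set (nbhd E v)) * pmf (embed_pmf (sel S)) v)"
    unfolding moran_step_eq_sel using set_pmf_embed_sel[OF S] finite_V
    by (simp, intro nn_integral_measure_pmf_support) auto
  also have "\<dots> = (\<Sum>v\<in>V. ennreal (sel S v * (\<Sum>w\<in>nbhd E v. g (S(w := S v)) / deg v)))"
    by (intro sum.cong refl)
      (simp add: uniform_nbhd pmf_embed_sel[OF S] sel_nonneg[OF S] ennreal_mult' mult.commute)
  also have "\<dots> = ennreal (\<Sum>v\<in>V. \<Sum>w\<in>nbhd E v. sel S v / deg v * g (S(w := S v)))"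
    using sel_nonneg[OF S] g_nonneg deg_nonneg
    by (subst sum_ennreal) (auto intro!: sum_nonneg simp: sum_distrib_left)
  finally show ?thesis by (simp only: sum_edges)
qed

lemma nbhd_nonempty:
  assumes "v \<in> V" "u \<in> V" "u \<noteq> v"
  shows "nbhd E v \<noteq> {}"
proof -
  have "(v, u) \<in> E\<^sup>*" using connected assms(1,2) unfolding connected_graph_def by blast
  then obtain z where "(v, z) \<in> E" using assms(3) by (blast elim: converse_rtranclE)
  then show ?thesis by (auto simp: nbhd_def)
qed

lemma not_absorbed_boundary_edge:
  assumes "\<not> absorbed V j S"
  obtains v w where "(v, w) \<in> E" "S v = j" "S w \<noteq> j"
proof -
  obtain x y where xy: "x \<in> V" "y \<in> V" "S x = j" "S y \<noteq> j"
    using assms unfolding absorbed_def by blast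
  have "(x, y) \<in> E\<^sup>*" using connected xy(1,2) unfolding connected_graph_def by blast
  from this xy(4) show ?thesis
  proof (induction rule: rtrancl_induct)
    case (step y z)
    then show ?case using that by (cases "S y = j") auto
  qed (use xy(3) in simp)
qed

lemma not_absorbed_nbhd_nonempty:
  assumes "\<not> absorbed V j S" "v \<in> V"
  shows "nbhd E v \<noteq> {}"
proof -
  obtain x y where "x \<in> V" "y \<in> V" "S x = j" "S y \<noteq> j"
    using assms(1) unfolding absorbed_def by blast
  then show ?thesis
    using nbhd_nonempty[OF assms(2)] by (cases "x = v") auto
qed

lemma not_absorbed_deg_ge_1: "\<not> absorbed V j S \<Longrightarrow> v \<in> V \<Longrightarrow> 1 \<le> deg v"
  using not_absorbed_nbhd_nonempty[of j S v] finite_nbhd[of v]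
  by (simp add: deg_def Suc_leI card_gt_0_iff)

lemma not_absorbed_sum_edge_weights:
  assumes "typed S" "\<not> absorbed V j S"
  shows "(\<Sum>(v, w)\<in>E. sel S v / deg v) = 1"
proof -
  have "(\<Sum>(v, w)\<in>E. sel S v / deg v) = (\<Sum>v\<in>V. \<Sum>w\<in>nbhd E v. sel S v / deg v)"
    by (rule sum_edges[symmetric])
  also have "\<dots> = (\<Sum>v\<in>V. sel S v)"
  proof (intro sum.cong refl)
    fix v assume "v \<in> V"
    then have "1 \<le> deg v" by (rule not_absorbed_deg_ge_1[OF assms(2)])
    then show "(\<Sum>w\<in>nbhd E v. sel S v / deg v) = sel S v" by (simp add: deg_def)
  qed
  finally show ?thesis using sum_sel[OF assms(1)] by simp
qed

lemma nn_integral_moran_step_plus_1_le: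
  assumes S: "typed S" "\<not> absorbed V j S" and g_nonneg: "\<And>S. 0 \<le> g S"
    and drift: "(\<Sum>(v, w)\<in>E. sel S v / deg v * g (S(w := S v))) \<le> g S - 1"
  shows "(\<integral>\<^sup>+S'. ennreal (g S') \<partial>moran_step V E f S) + 1 \<le> ennreal (g S)"
proof -
  have "\<forall>v\<in>V. nbhd E v \<noteq> {}"
    using not_absorbed_nbhd_nonempty[OF S(2)] by blast
  moreover have "0 \<le> (\<Sum>(v, w)\<in>E. sel S v / deg v * g (S(w := S v)))"
    using sel_nonneg[OF S(1)] deg_nonneg g_nonneg by (auto intro!: sum_nonneg)
  ultimately have "(\<integral>\<^sup>+S'. ennreal (g S') \<partial>moran_step V E f S) + 1
      = ennreal ((\<Sum>(v, w)\<in>E. sel S v / deg v * g (S(w := S v))) + 1)"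
    by (simp add: nn_integral_moran_step[OF S(1) _ g_nonneg] ennreal_plus)
  also have "\<dots> \<le> ennreal (g S)"
    using drift by (intro ennreal_leI) simp
  finally show ?thesis .
qed

end

locale moran_fittest = moran_graph V E tau f
  for V :: "'v set" and E and tau :: "'a set" and f +
  fixes \<alpha> :: 'a
  assumes finite_types: "finite tau" and fittest: "\<alpha> \<in> max_types tau f"
begin

definition f_alpha :: real where "f_alpha = real_of_rat (f \<alpha>)"
definition f_star :: real where "f_star = real_of_rat (Max (f ` (tau - max_types tau f)))"
definition min_drift :: real where "min_drift = (f_alpha - f_star) / (f_alpha * n ^ 3)"
definition ind :: "('v \<Rightarrow> 'a) \<Rightarrow> 'v \<Rightarrow> real" where "ind S v = (if S v = \<alpha> then 1 else 0)"

definition phi :: "('v \<Rightarrow> 'a) \<Rightarrow> real" where "phi S = (\<Sum>v\<in>V. ind S v / deg v)"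
definition phi_max :: real where "phi_max = (\<Sum>v\<in>V. 1 / deg v)"
definition phi_incr :: "('v \<Rightarrow> 'a) \<Rightarrow> 'v \<Rightarrow> 'v \<Rightarrow> real" where
  "phi_incr S v w = (ind S v - ind S w) / deg w"
definition drift :: "('v \<Rightarrow> 'a) \<Rightarrow> real" where
  "drift S = (\<Sum>(v, w)\<in>E. sel S v / deg v * phi_incr S v w)"
definition sq_drift :: "('v \<Rightarrow> 'a) \<Rightarrow> real" where
  "sq_drift S = (\<Sum>(v, w)\<in>E. sel S v / deg v * (phi_incr S v w)\<^sup>2)"

lemma fit_le_f_alpha: "typed S \<Longrightarrow> v \<in> V \<Longrightarrow> fit S v \<le> f_alpha"
  using fittest finite_types
  by (auto simp: typed_def fit_def f_alpha_def max_types_def image_subset_iff of_rat_less_eq)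

lemma f_alpha_ge_1: "1 \<le> f_alpha"
  using fitness_ge_1 fittest unfolding f_alpha_def max_types_def
  by (metis (mono_tags) mem_Collect_eq of_rat_1 of_rat_less_eq)

lemma total_fit_le: "typed S \<Longrightarrow> total_fit S \<le> n * f_alpha"
proof -
  assume "typed S"
  then have "total_fit S \<le> (\<Sum>u\<in>V. f_alpha)" unfolding total_fit_def by (intro sum_mono fit_le_f_alpha)
  then show ?thesis by (simp add: n_def)
qed

lemma f_star_lt_f_alpha:
  assumes "tau - max_types tau f \<noteq> {}"
  shows "f_star < f_alpha"
proof -
  have "Max (f ` (tau - max_types tau f)) \<in> f ` (tau - max_types tau f)"
    using finite_types assms by (intro Max_in) auto
  then obtain i where i: "i \<in> tau" "i \<notin> max_types tau f" "Max (f ` (tau - max_types tau f)) = f i"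
    by auto
  moreover have "f i \<le> Max (f ` tau)"
    using finite_types i(1) by simp
  ultimately have "f i < f \<alpha>"
    using fittest by (auto simp: max_types_def)
  then show ?thesis unfolding f_star_def f_alpha_def i(3) by (simp add: of_rat_less)
qed

lemma fit_le_f_star:
  assumes "max_types tau f = {\<alpha>}" "typed S" "w \<in> V" "S w \<noteq> \<alpha>"
  shows "fit S w \<le> f_star"
proof -
  have "S w \<in> tau - max_types tau f" using assms by (auto simp: typed_def)
  then show ?thesis using finite_types by (simp add: fit_def f_star_def of_rat_less_eq)
qed

lemma min_drift_pos: "tau - max_types tau f \<noteq> {} \<Longrightarrow> 0 < min_drift"
  using f_star_lt_f_alpha f_alpha_ge_1 n_ge_1 by (simp add: min_drift_def)

lemma phi_nonneg: "0 \<le> phi S"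
  unfolding phi_def by (intro sum_nonneg) (simp add: ind_def deg_nonneg)

lemma phi_le_phi_max: "phi S \<le> phi_max"
  unfolding phi_def phi_max_def by (intro sum_mono) (simp add: ind_def deg_nonneg divide_right_mono)

lemma phi_max_le_n: "phi_max \<le> n"
proof -
  have "1 / deg v \<le> 1" for v by (cases "deg v = 0") (auto simp: deg_def)
  then have "phi_max \<le> (\<Sum>v\<in>V. 1)" unfolding phi_max_def by (intro sum_mono)
  then show ?thesis by (simp add: n_def)
qed

lemma phi_fun_upd:
  assumes "(v, w) \<in> E"
  shows "phi (S(w := S v)) = phi S + phi_incr S v w"
proof -
  have w: "w \<in> V" using edge_endpoints[OF assms] by auto
  define rest where "rest = (\<Sum>u\<in>V - {w}. ind S u / deg u)"
  have "(\<Sum>u\<in>V - {w}. ind (S(w := S v)) u / deg u) = rest"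
    unfolding rest_def by (intro sum.cong) (auto simp: ind_def)
  then have "phi (S(w := S v)) = ind S v / deg w + rest"
    unfolding phi_def using finite_V w by (simp add: sum.remove ind_def del: fun_upd_apply) (simp add: ind_def)
  moreover have "phi S = ind S w / deg w + rest"
    unfolding phi_def rest_def using finite_V w by (simp add: sum.remove)
  ultimately show ?thesis by (simp add: phi_incr_def diff_divide_distrib)
qed

(* Thanks to the inverse-degree weights, an edge and its reverse differ only in the selection
   probabilities of their tails. *)
lemma drift_symmetrized:
  "2 * drift S = (\<Sum>(v, w)\<in>E. (sel S v - sel S w) * (ind S v - ind S w) / (deg v * deg w))"
proof -
  define a where "a v w = sel S v * (ind S v - ind S w) / (deg v * deg w)" for v w
  have "drift S = (\<Sum>(v, w)\<in>E. a v w)"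
    unfolding drift_def phi_incr_def a_def by (intro sum.cong refl) auto
  then have "2 * drift S = (\<Sum>(v, w)\<in>E. a v w) + (\<Sum>(v, w)\<in>E. a w v)"
    using sum_edges_swap[of a] by simp
  also have "\<dots> = (\<Sum>(v, w)\<in>E. a v w + a w v)"
    by (simp add: sum.distrib[symmetric] case_prod_unfold)
  also have "\<dots> = (\<Sum>(v, w)\<in>E. (sel S v - sel S w) * (ind S v - ind S w) / (deg v * deg w))"
    by (intro sum.cong refl) (auto simp: a_def add_divide_distrib[symmetric] mult.commute algebra_simps)
  finally show ?thesis .
qed

lemma sel_ind_comonotone:
  assumes "typed S" "v \<in> V" "w \<in> V"
  shows "0 \<le> (sel S v - sel S w) * (ind S v - ind S w)"
proof -
  have "sel S u \<le> sel S u'" if "S u' = \<alpha>" "u \<in> V" "u' \<in> V" for u u'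
    using that fit_le_f_alpha[OF assms(1), of u] total_fit_pos[OF assms(1)]
    by (simp add: sel_def fit_def f_alpha_def divide_right_mono)
  then show ?thesis using assms by (auto simp: ind_def)
qed

lemma drift_nonneg:
  assumes "typed S"
  shows "0 \<le> drift S"
proof -
  have "0 \<le> 2 * drift S"
    unfolding drift_symmetrized using sel_ind_comonotone[OF assms] edge_endpoints deg_nonneg
    by (intro sum_nonneg) (auto intro!: divide_nonneg_nonneg)
  then show ?thesis by simp
qed

lemma drift_ge_boundary_edge:
  assumes S: "typed S" and e: "(v0, w0) \<in> E" "S v0 = \<alpha>" "S w0 \<noteq> \<alpha>"
  shows "(f_alpha - fit S w0) / (total_fit S * deg v0 * deg w0) \<le> drift S"
proof -
  define b where "b v w = (sel S v - sel S w) * (ind S v - ind S w) / (deg v * deg w)" for v w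
  have b_nonneg: "0 \<le> b v w" if "(v, w) \<in> E" for v w
    using sel_ind_comonotone[OF S] edge_endpoints[OF that] deg_nonneg by (simp add: b_def)
  have e': "(w0, v0) \<in> E" using e(1) sym_E by (auto dest: symD)
  have "v0 \<noteq> w0" using e(2,3) by auto
  have "2 * b v0 w0 = (\<Sum>(v, w)\<in>{(v0, w0), (w0, v0)}. b v w)"
    using \<open>v0 \<noteq> w0\<close> by (simp add: b_def field_simps)
  also have "\<dots> \<le> (\<Sum>(v, w)\<in>E. b v w)"
    using e(1) e' finite_E b_nonneg by (intro sum_mono2) auto
  also have "\<dots> = 2 * drift S"
    unfolding b_def drift_symmetrized ..
  finally have "b v0 w0 \<le> drift S" by simp
  moreover have "b v0 w0 = (f_alpha - fit S w0) / (total_fit S * deg v0 * deg w0)"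
    using edge_endpoints[OF e(1)] e
    by (simp add: b_def sel_def ind_def fit_def f_alpha_def field_simps diff_divide_distrib)
  ultimately show ?thesis by simp
qed

lemma drift_lower_bound:
  assumes unique: "max_types tau f = {\<alpha>}" and ne: "tau - max_types tau f \<noteq> {}"
    and S: "typed S" "\<not> absorbed V \<alpha> S"
  shows "min_drift \<le> drift S"
proof -
  obtain v0 w0 where e: "(v0, w0) \<in> E" "S v0 = \<alpha>" "S w0 \<noteq> \<alpha>"
    using not_absorbed_boundary_edge[OF S(2)] by blast
  have v0: "v0 \<in> V" and w0: "w0 \<in> V" using edge_endpoints[OF e(1)] by auto
  have deg: "1 \<le> deg v0" "1 \<le> deg w0" "deg v0 \<le> n" "deg w0 \<le> n"
    using not_absorbed_deg_ge_1[OF S(2)] v0 w0 deg_le_n by auto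
  have F: "0 < total_fit S" "total_fit S \<le> n * f_alpha"
    using total_fit_pos[OF S(1)] total_fit_le[OF S(1)] by auto
  have gap: "0 < f_alpha - f_star" using f_star_lt_f_alpha[OF ne] by simp
  have "total_fit S * deg v0 * deg w0 \<le> (n * f_alpha) * n * n"
    using F deg by (intro mult_mono) auto
  then have "(f_alpha - f_star) / ((n * f_alpha) * n * n) \<le> (f_alpha - f_star) / (total_fit S * deg v0 * deg w0)"
    using gap F deg n_ge_1 f_alpha_ge_1 by (intro divide_left_mono) (auto intro!: mult_pos_pos)
  then have "min_drift \<le> (f_alpha - f_star) / (total_fit S * deg v0 * deg w0)"
    by (simp add: min_drift_def power3_eq_cube algebra_simps)
  also have "\<dots> \<le> (f_alpha - fit S w0) / (total_fit S * deg v0 * deg w0)"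
    using fit_le_f_star[OF unique S(1) w0 e(3)] F deg by (intro divide_right_mono) auto
  also have "\<dots> \<le> drift S"
    by (rule drift_ge_boundary_edge[OF S(1) e])
  finally show ?thesis .
qed

lemma sq_drift_lower_bound:
  assumes S: "typed S" "\<not> absorbed V \<alpha> S"
  shows "1 \<le> n ^ 4 * sq_drift S"
proof -
  have one_le_mult: "1 \<le> a \<Longrightarrow> 1 \<le> b \<Longrightarrow> 1 \<le> a * b" for a b :: real
    using mult_mono[of 1 a 1 b] by simp
  obtain v0 w0 where e: "(v0, w0) \<in> E" "S v0 = \<alpha>" "S w0 \<noteq> \<alpha>"
    using not_absorbed_boundary_edge[OF S(2)] by blast
  have v0: "v0 \<in> V" and w0: "w0 \<in> V" using edge_endpoints[OF e(1)] by auto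
  have deg: "1 \<le> deg v0" "1 \<le> deg w0" "deg v0 \<le> n" "deg w0 \<le> n"
    using not_absorbed_deg_ge_1[OF S(2)] v0 w0 deg_le_n by auto
  have "1 \<le> sel S v0 * n"
    using v0 e(2) total_fit_pos[OF S(1)] total_fit_le[OF S(1)]
    by (simp add: sel_def fit_def f_alpha_def field_simps mult.commute)
  moreover have "1 \<le> n / deg v0" "1 \<le> (n / deg w0)\<^sup>2"
    using deg by auto
  ultimately have "1 \<le> (sel S v0 * n) * (n / deg v0) * (n / deg w0)\<^sup>2"
    by (rule one_le_mult[OF one_le_mult])
  also have "\<dots> = n ^ 4 * (sel S v0 / deg v0 * (phi_incr S v0 w0)\<^sup>2)"
    using e by (simp add: phi_incr_def ind_def power2_eq_square field_simps power4_eq_xxxx)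
  also have "\<dots> \<le> n ^ 4 * sq_drift S"
  proof (rule mult_left_mono)
    have "(\<lambda>(v, w). sel S v / deg v * (phi_incr S v w)\<^sup>2) (v0, w0) \<le> sq_drift S"
      unfolding sq_drift_def using e(1) finite_E sel_nonneg[OF S(1)] deg_nonneg
      by (intro member_le_sum) auto
    then show "sel S v0 / deg v0 * (phi_incr S v0 w0)\<^sup>2 \<le> sq_drift S" by simp
  qed simp
  finally show ?thesis .
qed

lemma phi_sq_potential_drift:
  assumes S: "typed S" "\<not> absorbed V \<alpha> S"
  shows "(\<integral>\<^sup>+S'. ennreal (n ^ 4 * (phi_max\<^sup>2 - (phi S')\<^sup>2)) \<partial>moran_step V E f S) + 1
      \<le> ennreal (n ^ 4 * (phi_max\<^sup>2 - (phi S)\<^sup>2))"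
proof (rule nn_integral_moran_step_plus_1_le[OF S])
  show "0 \<le> n ^ 4 * (phi_max\<^sup>2 - (phi S')\<^sup>2)" for S'
    using phi_nonneg[of S'] phi_le_phi_max[of S'] by (auto intro!: power_mono)
  define q where "q v = sel S v / deg v" for v
  have q_sum: "(\<Sum>(v, w)\<in>E. q v) = 1"
    using not_absorbed_sum_edge_weights[OF S] by (simp add: q_def)
  have "(\<Sum>(v, w)\<in>E. sel S v / deg v * (n ^ 4 * (phi_max\<^sup>2 - (phi (S(w := S v)))\<^sup>2)))
      = (\<Sum>(v, w)\<in>E. n ^ 4 * (phi_max\<^sup>2 - (phi S)\<^sup>2) * q v
          - 2 * n ^ 4 * phi S * (q v * phi_incr S v w) - n ^ 4 * (q v * (phi_incr S v w)\<^sup>2))"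
    by (intro sum.cong refl) (auto simp: phi_fun_upd q_def[symmetric] power2_eq_square algebra_simps)
  also have "\<dots> = n ^ 4 * (phi_max\<^sup>2 - (phi S)\<^sup>2) * (\<Sum>(v, w)\<in>E. q v)
      - 2 * n ^ 4 * phi S * drift S - n ^ 4 * sq_drift S"
    by (simp add: sum_subtractf sum_distrib_left case_prod_unfold drift_def sq_drift_def q_def)
  also have "\<dots> \<le> n ^ 4 * (phi_max\<^sup>2 - (phi S)\<^sup>2) - 1"
  proof -
    have "0 \<le> 2 * n ^ 4 * phi S * drift S"
      using phi_nonneg[of S] drift_nonneg[OF S(1)] by simp
    with sq_drift_lower_bound[OF S] show ?thesis unfolding q_sum by linarith
  qed
  finally show "(\<Sum>(v, w)\<in>E. sel S v / deg v * (n ^ 4 * (phi_max\<^sup>2 - (phi (S(w := S v)))\<^sup>2)))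
      \<le> n ^ 4 * (phi_max\<^sup>2 - (phi S)\<^sup>2) - 1" .
qed

lemma phi_potential_drift:
  assumes unique: "max_types tau f = {\<alpha>}" and ne: "tau - max_types tau f \<noteq> {}"
    and S: "typed S" "\<not> absorbed V \<alpha> S"
  shows "(\<integral>\<^sup>+S'. ennreal ((phi_max - phi S') / min_drift) \<partial>moran_step V E f S) + 1
      \<le> ennreal ((phi_max - phi S) / min_drift)"
proof (rule nn_integral_moran_step_plus_1_le[OF S])
  have pos: "0 < min_drift" using min_drift_pos[OF ne] .
  show "0 \<le> (phi_max - phi S') / min_drift" for S'
    using phi_le_phi_max[of S'] pos by simp
  define q where "q v = sel S v / deg v" for v
  have q_sum: "(\<Sum>(v, w)\<in>E. q v) = 1"
    using not_absorbed_sum_edge_weights[OF S] by (simp add: q_def)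
  have "(\<Sum>(v, w)\<in>E. sel S v / deg v * ((phi_max - phi (S(w := S v))) / min_drift))
      = (\<Sum>(v, w)\<in>E. ((phi_max - phi S) * q v - q v * phi_incr S v w) / min_drift)"
    by (intro sum.cong refl) (auto simp: phi_fun_upd q_def[symmetric] diff_divide_distrib algebra_simps)
  also have "\<dots> = ((phi_max - phi S) * (\<Sum>(v, w)\<in>E. q v) - drift S) / min_drift"
    by (simp add: sum_divide_distrib[symmetric] sum_subtractf sum_distrib_left case_prod_unfold
        drift_def q_def)
  also have "\<dots> \<le> (phi_max - phi S) / min_drift - 1"
    using q_sum drift_lower_bound[OF unique ne S] pos by (simp add: field_simps)
  finally show "(\<Sum>(v, w)\<in>E. sel S v / deg v * ((phi_max - phi (S(w := S v))) / min_drift))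
      \<le> (phi_max - phi S) / min_drift - 1" .
qed

lemma expected_absorption_time_le_n6:
  assumes "set_pmf D \<subseteq> {S. typed S}"
  shows "expected_absorption_time V E f D \<alpha> \<le> ennreal (n ^ 6)"
proof (rule expected_absorption_time_le_additive_drift[OF _ assms])
  show "n ^ 4 * (phi_max\<^sup>2 - (phi S)\<^sup>2) \<le> n ^ 6" for S
  proof -
    have "phi_max\<^sup>2 - (phi S)\<^sup>2 \<le> n\<^sup>2"
      using phi_nonneg[of S] phi_le_phi_max[of S] phi_max_le_n by (smt (verit) power_mono zero_le_power2)
    then have "n ^ 4 * (phi_max\<^sup>2 - (phi S)\<^sup>2) \<le> n ^ 4 * n\<^sup>2"
      using n_ge_1 by (intro mult_left_mono) auto
    then show ?thesis by (simp add: power_add[symmetric])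
  qed
qed (use moran_step_typed phi_sq_potential_drift in auto)

lemma expected_absorption_time_le_unique_fittest:
  assumes unique: "max_types tau f = {\<alpha>}" and ne: "tau - max_types tau f \<noteq> {}"
    and D: "set_pmf D \<subseteq> {S. typed S}"
  shows "expected_absorption_time V E f D \<alpha> \<le> ennreal (f_alpha / (f_alpha - f_star) * n * n ^ 3)"
proof -
  have "expected_absorption_time V E f D \<alpha> \<le> ennreal (n / min_drift)"
  proof (rule expected_absorption_time_le_additive_drift[OF _ D])
    show "(phi_max - phi S) / min_drift \<le> n / min_drift" for S
      using phi_nonneg[of S] phi_max_le_n min_drift_pos[OF ne] by (intro divide_right_mono) auto
  qed (use moran_step_typed phi_potential_drift[OF unique ne] in auto)
  also have "n / min_drift = f_alpha / (f_alpha - f_star) * n * n ^ 3"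
    using f_star_lt_f_alpha[OF ne] f_alpha_ge_1 n_ge_1 by (simp add: min_drift_def field_simps)
  finally show ?thesis .
qed

lemma expected_absorption_time_le:
  assumes ne: "tau - max_types tau f \<noteq> {}" and D: "set_pmf D \<subseteq> {S. typed S}"
  shows "expected_absorption_time V E f D \<alpha>
    \<le> ennreal ((real (card (max_types tau f)) - 1) * n ^ 6 + f_alpha / (f_alpha - f_star) * (n + 1) * n ^ 3)"
proof -
  let ?k = "card (max_types tau f)"
  have "?k \<ge> 1"
    using fittest finite_types by (simp add: max_types_def Suc_le_eq card_gt_0_iff) blast
  have ratio_nonneg: "0 \<le> f_alpha / (f_alpha - f_star)"
    using f_star_lt_f_alpha[OF ne] f_alpha_ge_1 by simp
  show ?thesis
  proof (cases "?k = 1")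
    case True
    then have "max_types tau f = {\<alpha>}"
      using fittest by (metis card_1_singletonE of_nat_eq_1_iff singletonD)
    moreover have "f_alpha / (f_alpha - f_star) * n * n ^ 3 \<le> f_alpha / (f_alpha - f_star) * (n + 1) * n ^ 3"
      using ratio_nonneg n_ge_1 by (intro mult_right_mono mult_left_mono) auto
    ultimately show ?thesis
      using True expected_absorption_time_le_unique_fittest[OF _ ne D]
      by (auto elim!: order.trans intro!: ennreal_leI)
  next
    case False
    then have "1 \<le> real ?k - 1" using \<open>?k \<ge> 1\<close> by linarith
    then have "n ^ 6 \<le> (real ?k - 1) * n ^ 6" using n_ge_1 by (simp add: mult_le_cancel_right1)
    moreover have "0 \<le> f_alpha / (f_alpha - f_star) * (n + 1) * n ^ 3"
      using ratio_nonneg n_ge_1 by (intro mult_nonneg_nonneg) auto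
    ultimately show ?thesis
      using expected_absorption_time_le_n6[OF D] by (auto elim!: order.trans intro!: ennreal_leI)
  qed
qed

end

theorem corollary20:
  fixes V :: "'v set" and E :: "('v \<times> 'v) set" and tau :: "'a set"
    and f :: "'a \<Rightarrow> rat" and D :: "('v \<Rightarrow> 'a) pmf" and \<alpha> :: 'a
  assumes "connected_graph V E"
    and "finite tau" and "card tau > 1"
    and "\<forall>i\<in>tau. f i \<ge> 1"
    and "D \<in> init_dists V tau"
    and "tau - max_types tau f \<noteq> {}"
    and "\<alpha> \<in> max_types tau f"
  shows "expected_absorption_time V E f D \<alpha> \<le>
    ennreal ((real (card (max_types tau f)) - 1) * real (card V) ^ 6
      + real_of_rat (f \<alpha>) / (real_of_rat (f \<alpha>) - real_of_rat (Max (f ` (tau - max_types tau f))))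
        * (real (card V) + 1) * real (card V) ^ 3)"
proof -
  \<comment> \<open>card tau > 1 follows from the other hypotheses, and of D only its support matters.\<close>
  interpret moran_fittest V E tau f \<alpha>
    using assms by unfold_locales auto
  have "set_pmf D \<subseteq> {S. typed S}"
    using assms(5) by (auto simp: init_dists_def states_def typed_def)
  from expected_absorption_time_le[OF assms(6) this] show ?thesis
    by (simp add: n_def f_alpha_def f_star_def)
qed

end
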